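(* For every integer $n\ge 2$, \[ \gamma_{2t}(K_n\Box K_{n+1})=\begin{cases}(3n+2)/2, & n\equiv 0\pmod 2,\\ (3n+3)/2, & n\equiv 1\pmod 2.\end{cases} \]
   Context: For a graph $G=(V,E)$, a set $S\subseteq V$ is a total $2$-dominating set if every vertex of $V$ (including those in $S$) is adjacent to at least $2$ vertices of $S$; $\gamma_{2t}(G)$ is the minimum cardinality of such a set. $G\Box H$ denotes the Cartesian product: vertex set $V(G)\times V(H)$, with $(u_1,v_1)\sim(u_2,v_2)$ iff either $u_1=u_2$ and $v_1\sim v_2$, or $v_1=v_2$ and $u_1\sim u_2$. $K_n$ is the complete graph on $n$ vertices. *)

theory Defs
  imports Main
begin

definition total_k_dominating :: "nat \<Rightarrow> 'a set \<Rightarrow> ('a \<Rightarrow> 'a \<Rightarrow> bool) \<Rightarrow> 'a set \<Rightarrow> bool" where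
  "total_k_dominating k V adj S \<longleftrightarrow>
     S \<subseteq> V \<and> (\<forall>v\<in>V. k \<le> card {u\<in>S. adj v u})"

definition gamma_kt :: "nat \<Rightarrow> 'a set \<Rightarrow> ('a \<Rightarrow> 'a \<Rightarrow> bool) \<Rightarrow> nat" where
  "gamma_kt k V adj = (LEAST c. \<exists>S. finite S \<and> total_k_dominating k V adj S \<and> card S = c)"

definition K_verts :: "nat \<Rightarrow> nat set" where
  "K_verts n = {0..<n}"

definition K_adj :: "nat \<Rightarrow> nat \<Rightarrow> bool" where
  "K_adj u v \<longleftrightarrow> u \<noteq> v"

definition cart_verts :: "'a set \<Rightarrow> 'b set \<Rightarrow> ('a \<times> 'b) set" where
  "cart_verts V W = V \<times> W"

definition cart_adj :: "('a \<Rightarrow> 'a \<Rightarrow> bool) \<Rightarrow> ('b \<Rightarrow> 'b \<Rightarrow> bool) \<Rightarrow> 'a \<times> 'b \<Rightarrow> 'a \<times> 'b \<Rightarrow> bool" where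
  "cart_adj adjG adjH p q \<longleftrightarrow>
     (fst p = fst q \<and> adjH (snd p) (snd q)) \<or> (snd p = snd q \<and> adjG (fst p) (fst q))"

end

theory Submission
  imports Defs Complex_Main
begin

(* View K_n \<box> K_m as an n \<times> m board: a set S of cells is total 2-dominating iff every cell
   sees at least two cells of S in its row and column. If some row misses S, every column must
   contain two cells of S, and symmetrically, so |S| \<ge> 2 min(n, m). Otherwise every cell s of S
   has row and column counts r_s, c_s with r_s + c_s \<ge> 4, hence 1/r_s + 1/c_s \<le> 4/3; summing
   over S counts each row and each column exactly once, so n + m \<le> 4|S|/3. For m = n + 1 both
   cases give 2|S| \<ge> 3n + 2.
   Conversely, stars of six cells placed on consecutive 4 \<times> 4 diagonal blocks, appended to an
   explicit configuration on a p \<times> (p + 1) board with 3 \<le> p \<le> 6, give 2|S| \<le> 3n + 3. *)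

definition row :: "('a \<times> 'b) set \<Rightarrow> 'a \<Rightarrow> ('a \<times> 'b) set" where
  "row S i = {v \<in> S. fst v = i}"

definition col :: "('a \<times> 'b) set \<Rightarrow> 'b \<Rightarrow> ('a \<times> 'b) set" where
  "col S j = {v \<in> S. snd v = j}"

lemma row_insert: "row (insert v S) i = (if fst v = i then insert v (row S i) else row S i)"
  by (auto simp: row_def)

lemma col_insert: "col (insert v S) j = (if snd v = j then insert v (col S j) else col S j)"
  by (auto simp: col_def)

lemma row_empty [simp]: "row {} i = {}"
  by (simp add: row_def)

lemma col_empty [simp]: "col {} j = {}"
  by (simp add: col_def)

lemma row_Un: "row (S \<union> S') i = row S i \<union> row S' i"
  by (auto simp: row_def)

lemma col_Un: "col (S \<union> S') j = col S j \<union> col S' j"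
  by (auto simp: col_def)

lemma row_eq_empty_iff: "row S i = {} \<longleftrightarrow> i \<notin> fst ` S"
  by (force simp: row_def)

lemma col_eq_empty_iff: "col S j = {} \<longleftrightarrow> j \<notin> snd ` S"
  by (force simp: col_def)

lemma card_rook_neighbours:
  assumes "finite S"
  shows "card {u \<in> S. cart_adj K_adj K_adj v u} =
    card (row S (fst v) - {v}) + card (col S (snd v) - {v})"
proof -
  have "{u \<in> S. cart_adj K_adj K_adj v u} = (row S (fst v) - {v}) \<union> (col S (snd v) - {v})"
    by (auto simp: row_def col_def cart_adj_def K_adj_def prod_eq_iff)
  moreover have "(row S (fst v) - {v}) \<inter> (col S (snd v) - {v}) = {}"
    by (auto simp: row_def col_def prod_eq_iff)
  ultimately show ?thesis
    using assms by (simp add: card_Un_disjoint row_def col_def)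
qed

definition dominating_pattern :: "'a set \<Rightarrow> 'b set \<Rightarrow> ('a \<times> 'b) set \<Rightarrow> bool" where
  "dominating_pattern A B S \<longleftrightarrow> fst ` S = A \<and> snd ` S = B \<and>
     (\<forall>v\<in>S. 4 \<le> card (row S (fst v)) + card (col S (snd v)))"

lemma total_2_dominating_rook_iff:
  assumes "finite S" "fst ` S = A" "snd ` S = B"
  shows "total_k_dominating 2 (A \<times> B) (cart_adj K_adj K_adj) S \<longleftrightarrow> dominating_pattern A B S"
proof -
  have fin: "finite (row S i)" "finite (col S j)" for i j
    using assms(1) by (simp_all add: row_def col_def)
  have in_lines: "v \<in> row S (fst v)" "v \<in> col S (snd v)" if "v \<in> S" for v
    using that by (simp_all add: row_def col_def)
  have degree_in:
    "card {u \<in> S. cart_adj K_adj K_adj v u} + 2 = card (row S (fst v)) + card (col S (snd v))"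
    if "v \<in> S" for v
  proof -
    have "card (row S (fst v)) \<ge> 1" "card (col S (snd v)) \<ge> 1"
      using in_lines[OF that] fin by (auto simp: Suc_le_eq card_gt_0_iff)
    then show ?thesis
      using card_rook_neighbours[OF assms(1)] in_lines[OF that] fin by simp
  qed
  have degree_out: "2 \<le> card {u \<in> S. cart_adj K_adj K_adj v u}" if "v \<in> A \<times> B" "v \<notin> S" for v
  proof -
    have "row S (fst v) \<noteq> {}" "col S (snd v) \<noteq> {}"
      using that(1) assms(2,3) by (force simp: row_def col_def)+
    then have "0 < card (row S (fst v))" "0 < card (col S (snd v))"
      using fin by (simp_all add: card_gt_0_iff)
    moreover have "row S (fst v) - {v} = row S (fst v)" "col S (snd v) - {v} = col S (snd v)"
      using that(2) by (auto simp: row_def col_def)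
    ultimately show ?thesis
      using card_rook_neighbours[OF assms(1), of v] by simp
  qed
  have sub: "S \<subseteq> A \<times> B"
    using subset_fst_snd assms(2,3) by blast
  show ?thesis
  proof
    assume dom: "total_k_dominating 2 (A \<times> B) (cart_adj K_adj K_adj) S"
    have "4 \<le> card (row S (fst v)) + card (col S (snd v))" if "v \<in> S" for v
    proof -
      have "2 \<le> card {u \<in> S. cart_adj K_adj K_adj v u}"
        using dom sub that unfolding total_k_dominating_def by blast
      then show ?thesis
        using degree_in[OF that] by linarith
    qed
    then show "dominating_pattern A B S"
      using assms(2,3) by (simp add: dominating_pattern_def)
  next
    assume pattern: "dominating_pattern A B S"
    have "2 \<le> card {u \<in> S. cart_adj K_adj K_adj v u}" if "v \<in> A \<times> B" for v
    proof (cases "v \<in> S")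
      case True
      then have "4 \<le> card (row S (fst v)) + card (col S (snd v))"
        using pattern by (simp add: dominating_pattern_def)
      then show ?thesis
        using degree_in[OF True] by linarith
    next
      case False
      then show ?thesis
        using degree_out[OF that] by simp
    qed
    then show "total_k_dominating 2 (A \<times> B) (cart_adj K_adj K_adj) S"
      using sub by (simp add: total_k_dominating_def)
  qed
qed

lemma card_eq_sum_card_fibres:
  assumes "finite S" "finite B" "f ` S \<subseteq> B"
  shows "card S = (\<Sum>y\<in>B. card {x \<in> S. f x = y})"
  using sum.group[OF assms, of "\<lambda>_. 1::nat"] by simp

lemma sum_inverse_card_fibres:
  assumes "finite S"
  shows "(\<Sum>x\<in>S. 1 / real (card {y \<in> S. f y = f x})) = real (card (f ` S))"
proof -
  have "(\<Sum>x\<in>S. 1 / real (card {y \<in> S. f y = f x}))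
      = (\<Sum>z\<in>f ` S. \<Sum>x\<in>{x \<in> S. f x = z}. 1 / real (card {y \<in> S. f y = f x}))"
    by (rule sum.image_gen[OF assms])
  also have "\<dots> = (\<Sum>z\<in>f ` S. 1)"
  proof (rule sum.cong[OF refl])
    fix z assume "z \<in> f ` S"
    then have "card {x \<in> S. f x = z} \<noteq> 0"
      using assms by auto
    then show "(\<Sum>x\<in>{x \<in> S. f x = z}. 1 / real (card {y \<in> S. f y = f x})) = 1"
      by simp
  qed
  finally show ?thesis by simp
qed

lemma inverse_add_inverse_le_four_thirds:
  fixes r c :: nat
  assumes "1 \<le> r" "1 \<le> c" "4 \<le> r + c"
  shows "1 / real r + 1 / real c \<le> 4 / 3"
proof -
  have "3 * (r + c) \<le> 4 * (r * c)"
  proof (cases "r \<le> 2")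
    case True
    then have "r = 1 \<or> r = 2"
      using assms(1) by linarith
    then show ?thesis
      using assms(3) by auto
  next
    case False
    then have "3 * c \<le> r * c" by simp
    moreover have "r \<le> r * c" using assms(2) by simp
    ultimately show ?thesis by arith
  qed
  then have "real (3 * (r + c)) \<le> real (4 * (r * c))"
    by (simp only: of_nat_le_iff)
  then show ?thesis
    using assms(1,2) by (simp add: divide_simps)
qed

lemma card_dominating_pattern_lower:
  assumes "finite S" "dominating_pattern A B S"
  shows "3 * (card A + card B) \<le> 4 * card S"
proof -
  have rows: "(\<Sum>v\<in>S. 1 / real (card (row S (fst v)))) = real (card A)"
    and cols: "(\<Sum>v\<in>S. 1 / real (card (col S (snd v)))) = real (card B)"
    using sum_inverse_card_fibres[OF assms(1), of fst] sum_inverse_card_fibres[OF assms(1), of snd]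
      assms(2)
    by (simp_all add: row_def col_def dominating_pattern_def)
  have "1 / real (card (row S (fst v))) + 1 / real (card (col S (snd v))) \<le> 4 / 3" if "v \<in> S" for v
  proof (rule inverse_add_inverse_le_four_thirds)
    have "v \<in> row S (fst v)" "v \<in> col S (snd v)" "finite (row S (fst v))" "finite (col S (snd v))"
      using that assms(1) by (simp_all add: row_def col_def)
    then show "1 \<le> card (row S (fst v))" "1 \<le> card (col S (snd v))"
      by (auto simp: Suc_le_eq card_gt_0_iff)
    show "4 \<le> card (row S (fst v)) + card (col S (snd v))"
      using that assms(2) by (simp add: dominating_pattern_def)
  qed
  then have "real (card A) + real (card B) \<le> (\<Sum>v\<in>S. 4 / 3)"
    unfolding rows [symmetric] cols [symmetric] sum.distrib [symmetric] by (rule sum_mono)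
  then show ?thesis
    by simp
qed

lemma card_total_2_dominating_rook_lower:
  assumes "finite A" "finite B" "finite S"
    and dom: "total_k_dominating 2 (A \<times> B) (cart_adj K_adj K_adj) S"
  shows "2 * card B \<le> card S \<or> 2 * card A \<le> card S \<or> 3 * (card A + card B) \<le> 4 * card S"
proof -
  have sub: "S \<subseteq> A \<times> B"
    using dom by (simp add: total_k_dominating_def)
  then have proj: "fst ` S \<subseteq> A" "snd ` S \<subseteq> B"
    by auto
  have lines: "2 \<le> card (row S i - {(i, j)}) + card (col S j - {(i, j)})" if "i \<in> A" "j \<in> B" for i j
  proof -
    have "2 \<le> card {u \<in> S. cart_adj K_adj K_adj (i, j) u}"
      using dom that unfolding total_k_dominating_def by blast
    then show ?thesis
      using card_rook_neighbours[OF assms(3), of "(i, j)"] by simp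
  qed
  consider (empty_row) i where "i \<in> A" "row S i = {}"
    | (empty_col) j where "j \<in> B" "col S j = {}"
    | (full) "fst ` S = A" "snd ` S = B"
    using sub by (force simp: row_def col_def)
  then show ?thesis
  proof cases
    case empty_row
    have "2 \<le> card (col S j)" if "j \<in> B" for j
      using lines[OF empty_row(1) that] empty_row(2) card_Diff1_le[of "col S j" "(i, j)"] by simp
    then have "(\<Sum>j\<in>B. 2) \<le> (\<Sum>j\<in>B. card (col S j))"
      by (rule sum_mono)
    also have "\<dots> = card S"
      using card_eq_sum_card_fibres[OF assms(3,2) proj(2)] by (simp add: col_def)
    finally show ?thesis by simp
  next
    case empty_col
    have "2 \<le> card (row S i)" if "i \<in> A" for i
      using lines[OF that empty_col(1)] empty_col(2) card_Diff1_le[of "row S i" "(i, j)"] by simp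
    then have "(\<Sum>i\<in>A. 2) \<le> (\<Sum>i\<in>A. card (row S i))"
      by (rule sum_mono)
    also have "\<dots> = card S"
      using card_eq_sum_card_fibres[OF assms(3,1) proj(1)] by (simp add: row_def)
    finally show ?thesis by simp
  next
    case full
    then show ?thesis
      using card_dominating_pattern_lower[OF assms(3)] total_2_dominating_rook_iff[OF assms(3)] dom
      by blast
  qed
qed

lemma dominating_pattern_finite:
  assumes "finite A" "finite B" "dominating_pattern A B S"
  shows "finite S"
proof (rule finite_subset)
  show "S \<subseteq> A \<times> B"
    using assms(3) subset_fst_snd[of S] by (simp add: dominating_pattern_def)
qed (use assms(1,2) in simp)

lemma dominating_pattern_Un:
  assumes S: "dominating_pattern A B S" and S': "dominating_pattern A' B' S'"
    and disjoint: "A \<inter> A' = {}" "B \<inter> B' = {}"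
  shows "dominating_pattern (A \<union> A') (B \<union> B') (S \<union> S')"
proof -
  have proj: "fst ` S = A" "snd ` S = B" "fst ` S' = A'" "snd ` S' = B'"
    using S S' by (simp_all add: dominating_pattern_def)
  have "row S' (fst v) = {}" "col S' (snd v) = {}" if "v \<in> S" for v
    using that disjoint proj by (auto simp: row_eq_empty_iff col_eq_empty_iff)
  moreover have "row S (fst v) = {}" "col S (snd v) = {}" if "v \<in> S'" for v
    using that disjoint proj by (auto simp: row_eq_empty_iff col_eq_empty_iff)
  ultimately show ?thesis
    using S S' by (simp add: dominating_pattern_def image_Un row_Un col_Un ball_Un)
qed

lemma dominating_pattern_map_prod:
  assumes S: "dominating_pattern A B S" and "inj f" "inj g"
  shows "dominating_pattern (f ` A) (g ` B) (map_prod f g ` S)"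
proof -
  have inj: "inj_on (map_prod f g) X" for X
    using map_prod_inj_on[of f UNIV g UNIV] assms(2,3) inj_on_subset[OF _ subset_UNIV] by simp
  have "row (map_prod f g ` S) (f i) = map_prod f g ` row S i" for i
    using \<open>inj f\<close> by (force simp: row_def inj_eq)
  moreover have "col (map_prod f g ` S) (g j) = map_prod f g ` col S j" for j
    using \<open>inj g\<close> by (force simp: col_def inj_eq)
  ultimately have "card (row (map_prod f g ` S) (fst (map_prod f g v))) = card (row S (fst v))"
    "card (col (map_prod f g ` S) (snd (map_prod f g v))) = card (col S (snd v))" for v
    by (simp_all add: card_image[OF inj])
  moreover have "A = fst ` S" "B = snd ` S"
    using S by (simp_all add: dominating_pattern_def)
  ultimately show ?thesis
    using S by (simp add: dominating_pattern_def image_image)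
qed

definition star4 :: "(nat \<times> nat) set" where
  "star4 = {(0, 1), (0, 2), (0, 3), (1, 0), (2, 0), (3, 0)}"

lemma dominating_pattern_star4: "dominating_pattern {0..<4} {0..<4} star4"
  unfolding dominating_pattern_def star4_def
  by (simp add: row_insert col_insert atLeast0LessThan lessThan_nat_numeral lessThan_Suc
      insert_commute)

lemma dominating_pattern_add_stars:
  assumes "dominating_pattern {0..<p} {0..<q} T"
  shows "\<exists>S. dominating_pattern {0..<p + 4 * m} {0..<q + 4 * m} S \<and> card S \<le> card T + 6 * m"
proof (induction m)
  case 0
  then show ?case
    using assms by auto
next
  case (Suc m)
  then obtain S where S: "dominating_pattern {0..<p + 4 * m} {0..<q + 4 * m} S"
    and card_S: "card S \<le> card T + 6 * m"
    by blast
  let ?star = "map_prod ((+) (p + 4 * m)) ((+) (q + 4 * m)) ` star4"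
  have "dominating_pattern {p + 4 * m..<p + 4 * Suc m} {q + 4 * m..<q + 4 * Suc m} ?star"
    using dominating_pattern_map_prod[OF dominating_pattern_star4,
        of "(+) (p + 4 * m)" "(+) (q + 4 * m)"]
    by (simp add: ac_simps)
  then have "dominating_pattern ({0..<p + 4 * m} \<union> {p + 4 * m..<p + 4 * Suc m})
      ({0..<q + 4 * m} \<union> {q + 4 * m..<q + 4 * Suc m}) (S \<union> ?star)"
    by (rule dominating_pattern_Un[OF S]) auto
  moreover have "card (S \<union> ?star) \<le> card T + 6 * Suc m"
  proof -
    have "card ?star \<le> 6"
      using card_image_le[of star4] by (simp add: star4_def)
    then show ?thesis
      using card_Un_le[of S ?star] card_S by simp
  qed
  ultimately show ?case
    using ivl_disj_un_two(3)[of 0 "p + 4 * m" "p + 4 * Suc m"]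
      ivl_disj_un_two(3)[of 0 "q + 4 * m" "q + 4 * Suc m"]
    by auto
qed

lemma dominating_pattern_base:
  assumes "p \<in> {3, 4, 5, 6}"
  obtains T where "dominating_pattern {0..<p} {0..<p + 1} T" "2 * card T \<le> 3 * p + 3"
proof -
  note eval = row_insert col_insert atLeast0LessThan lessThan_nat_numeral lessThan_Suc insert_commute
  consider "p = 3" | "p = 4" | "p = 5" | "p = 6"
    using assms by blast
  then show thesis
  proof cases
    case 1
    show thesis
      by (rule that[of "{(0, 0), (0, 1), (0, 2), (0, 3), (1, 0), (2, 0)}"])
        (simp_all add: 1 dominating_pattern_def eval)
  next
    case 2
    show thesis
      by (rule that[of "{(0, 0), (0, 1), (0, 2), (0, 3), (1, 4), (2, 4), (3, 4)}"])
        (simp_all add: 2 dominating_pattern_def eval)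
  next
    case 3
    show thesis
      by (rule that[of "{(0, 0), (0, 1), (0, 2), (0, 3), (0, 4), (1, 5), (2, 5), (3, 5), (4, 5)}"])
        (simp_all add: 3 dominating_pattern_def eval)
  next
    case 4
    show thesis
      by (rule that[of "{(0, 1), (0, 2), (0, 3), (1, 4), (1, 5), (1, 6), (2, 0), (3, 0), (4, 0), (5, 0)}"])
        (simp_all add: 4 dominating_pattern_def eval)
  qed
qed

lemma total_2_dominating_rook_upper:
  assumes "2 \<le> n"
  obtains S where "finite S"
    and "total_k_dominating 2 ({0..<n} \<times> {0..<n + 1}) (cart_adj K_adj K_adj) S"
    and "2 * card S \<le> 3 * n + 3"
proof (cases "n = 2")
  case True
  \<comment> \<open>The 2 \<times> 3 board has no dominating pattern of four cells; this S leaves column 2 empty.\<close>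
  let ?S = "{(0, 0), (0, 1), (1, 0), (1, 1)} :: (nat \<times> nat) set"
  have "finite ?S"
    by simp
  then have "total_k_dominating 2 ({0..<2} \<times> {0..<3}) (cart_adj K_adj K_adj) ?S"
    unfolding total_k_dominating_def card_rook_neighbours[OF \<open>finite ?S\<close>]
    by (simp add: atLeast0LessThan lessThan_nat_numeral lessThan_Suc row_insert col_insert
        insert_commute)
  then show thesis
    using that[of ?S] True by simp
next
  case False
  define m where "m = (n - 3) div 4"
  define p where "p = n - 4 * m"
  have p: "p \<in> {3, 4, 5, 6}" and n: "n = p + 4 * m"
    using assms False unfolding p_def m_def by auto presburger+
  obtain T where T: "dominating_pattern {0..<p} {0..<p + 1} T" "2 * card T \<le> 3 * p + 3"
    using dominating_pattern_base[OF p] .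
  obtain S where S: "dominating_pattern {0..<n} {0..<n + 1} S" "card S \<le> card T + 6 * m"
    using dominating_pattern_add_stars[OF T(1), of m] n by (auto simp: ac_simps)
  have "finite S"
    using dominating_pattern_finite[OF _ _ S(1)] by simp
  moreover have "total_k_dominating 2 ({0..<n} \<times> {0..<n + 1}) (cart_adj K_adj K_adj) S"
    using total_2_dominating_rook_iff[OF \<open>finite S\<close>] S(1) by (simp add: dominating_pattern_def)
  moreover have "2 * card S \<le> 3 * n + 3"
    using S(2) T(2) n by simp
  ultimately show thesis
    by (rule that)
qed

lemma gamma_kt_le_card:
  assumes "finite S" "total_k_dominating k V adj S"
  shows "gamma_kt k V adj \<le> card S"
  unfolding gamma_kt_def using assms by (intro Least_le) blast

lemma gamma_kt_attained:
  assumes "finite S" "total_k_dominating k V adj S"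
  obtains S' where "finite S'" "total_k_dominating k V adj S'" "card S' = gamma_kt k V adj"
proof -
  have "\<exists>S'. finite S' \<and> total_k_dominating k V adj S' \<and>
      card S' = (LEAST c. \<exists>S. finite S \<and> total_k_dominating k V adj S \<and> card S = c)"
    by (rule LeastI[of _ "card S"]) (use assms in blast)
  then show thesis
    using that unfolding gamma_kt_def by blast
qed

theorem theorem14:
  fixes n :: nat
  assumes "n \<ge> 2"
  shows "gamma_kt 2 (cart_verts (K_verts n) (K_verts (n+1))) (cart_adj K_adj K_adj) =
           (if even n then (3*n+2) div 2 else (3*n+3) div 2)"
proof -
  let ?V = "{0..<n} \<times> {0..<n + 1}" and ?adj = "cart_adj K_adj K_adj"
  have V: "cart_verts (K_verts n) (K_verts (n + 1)) = ?V"
    by (simp add: cart_verts_def K_verts_def)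
  obtain S where S: "finite S" "total_k_dominating 2 ?V ?adj S" "2 * card S \<le> 3 * n + 3"
    using total_2_dominating_rook_upper[OF assms] .
  obtain S' where S': "finite S'" "total_k_dominating 2 ?V ?adj S'" "card S' = gamma_kt 2 ?V ?adj"
    using gamma_kt_attained[OF S(1,2)] .
  have "2 * (n + 1) \<le> card S' \<or> 2 * n \<le> card S' \<or> 3 * (n + (n + 1)) \<le> 4 * card S'"
    using card_total_2_dominating_rook_lower[OF _ _ S'(1,2)] by simp
  then have lower: "3 * n + 2 \<le> 2 * gamma_kt 2 ?V ?adj"
    using assms S'(3) by presburger
  have upper: "2 * gamma_kt 2 ?V ?adj \<le> 3 * n + 3"
    using gamma_kt_le_card[OF S(1,2)] S(3) by linarith
  show ?thesis
    unfolding V using lower upper by presburger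
qed

end
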